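(* Let $n\ge 2$. The $V_n$-graded Hilbert functions of the $R/J_n$-modules $\langle p_n\rangle$ and $\langle p^+_{n,i}\rangle$, $i=1,\dots,n$, take only the values $0$ and $1$.
   Context: Let $\mathbbm{k}$ be a field, $[n]=\{1,\dots,n\}$, $R=\mathbbm{k}[x_{ij}:1\le i\le j\le n]$ with $x_{ij}=x_{ji}$; exponent vectors in $\mathbb{N}^{\binom{n+1}{2}}$ with basis $e_{ij}=e_{ji}$. $V_n$ is the $n\times\binom{n+1}{2}$ matrix whose column indexed by $jk$ is $e_j+e_k\in\mathbb{Z}^n$; $R$ is $\mathbb{N}^n$-graded by $\deg x_{jk}=e_j+e_k$ (the $V_n$-grading), and the $V_n$-graded Hilbert function of a graded module $M$ is $\mathbf b\mapsto\dim_{\mathbbm{k}}M_{\mathbf b}$. For $\mathbf b\in\mathbb{N}^n$, $V_n^{-1}[\mathbf b]=\{u\in\mathbb{N}^{\binom{n+1}{2}}:V_nu=\mathbf b\}$. $J_n$ is the ($V_n$-homogeneous) ideal generated by the principal $2$-minors $x_{ii}x_{jj}-x_{ij}^2$. With $[ij|kl]:=e_{ik}+e_{jl}-e_{il}-e_{jk}$, $L'_n$ is the lattice generated by the $[ij|ij]$; two points of a fiber are equivalent if their difference lies in $L'_n$. Define $p_n=\prod_{1\le i<j\le n-1}(x_{ij}x_{nn}+x_{in}x_{jn})$. If $n$ is odd, $p^+_{n,i}\in R/J_n$ is the sum of $x^{\mathbf a}$ over the equivalence classes $\mathbf a$ of $V_n^{-1}[(n-2,\dots,n-2)+e_i]$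 modulo $L'_n$; if $n$ is even, $p^+_{n,i}:=p^+_n$ for all $i$, the sum of $x^{\mathbf a}$ over the equivalence classes of $V_n^{-1}[(n-2,\dots,n-2)]$ modulo $L'_n$. *)

theory Defs
  imports Main HOL.Vector_Spaces "HOL-Library.Poly_Mapping"
begin

text \<open>Polynomials in the variables x_ij (i <= j, indexed by the pair (i,j)) with
  coefficients in a field 'k.  Monomials are exponent vectors (nat*nat =>0 nat).\<close>

type_synonym 'k spoly = "((nat \<times> nat) \<Rightarrow>\<^sub>0 nat) \<Rightarrow>\<^sub>0 'k"

text \<open>Valid variable indices: 1 <= i <= j <= n  (x_ij = x_ji is stored at (min,max)).\<close>
definition valid_idx :: "nat \<Rightarrow> nat \<times> nat \<Rightarrow> bool" where
  "valid_idx n ij \<longleftrightarrow> 1 \<le> fst ij \<and> fst ij \<le> snd ij \<and> snd ij \<le> n"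

definition X :: "nat \<Rightarrow> nat \<Rightarrow> 'k::field spoly" where
  "X i j = Poly_Mapping.single (Poly_Mapping.single (min i j, max i j) 1) 1"

definition Mons :: "nat \<Rightarrow> ((nat \<times> nat) \<Rightarrow>\<^sub>0 nat) set" where
  "Mons n = {u. \<forall>ij \<in> Poly_Mapping.keys u. valid_idx n ij}"

text \<open>The V_n-degree V_n u of an exponent vector (column jk of V_n is e_j + e_k).\<close>
definition Vdeg :: "((nat \<times> nat) \<Rightarrow>\<^sub>0 nat) \<Rightarrow> nat \<Rightarrow> nat" where
  "Vdeg u = (\<lambda>k. \<Sum>ij \<in> Poly_Mapping.keys u. Poly_Mapping.lookup u ij *
       ((if fst ij = k then 1 else 0) + (if snd ij = k then 1 else 0)))"

definition Rn :: "nat \<Rightarrow> 'k::field spoly set" where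
  "Rn n = {p. \<forall>u \<in> Poly_Mapping.keys p. u \<in> Mons n}"

definition Rdeg :: "nat \<Rightarrow> (nat \<Rightarrow> nat) \<Rightarrow> 'k::field spoly set" where
  "Rdeg n b = {p \<in> Rn n. \<forall>u \<in> Poly_Mapping.keys p. Vdeg u = b}"

definition Jn :: "nat \<Rightarrow> 'k::field spoly set" where
  "Jn n = {\<Sum>ij \<in> {(i,j). 1 \<le> i \<and> i < j \<and> j \<le> n}.
              q ij * (X (fst ij) (fst ij) * X (snd ij) (snd ij) - X (fst ij) (snd ij) ^ 2)
           | q. \<forall>ij. q ij \<in> Rn n}"

text \<open>Preimage in R of the R/J_n-submodule generated by the class of f: (f) + J_n.\<close>
definition gen_mod :: "nat \<Rightarrow> 'k::field spoly \<Rightarrow> 'k spoly set" where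
  "gen_mod n f = {q * f + h | q h. q \<in> Rn n \<and> h \<in> Jn n}"

definition kscale :: "'k::field \<Rightarrow> 'k spoly \<Rightarrow> 'k spoly" where
  "kscale c p = Poly_Mapping.single 0 c * p"

text \<open>V_n-graded Hilbert function of the R/J_n-module generated by the class of f:
  dim_k ( ((f)+J_n) / J_n )_b = dim_k ((f)+J_n)_b - dim_k (J_n)_b.\<close>
definition hilb :: "nat \<Rightarrow> 'k::field spoly \<Rightarrow> (nat \<Rightarrow> nat) \<Rightarrow> nat" where
  "hilb n f b = vector_space.dim kscale (gen_mod n f \<inter> Rdeg n b)
              - vector_space.dim kscale (Jn n \<inter> Rdeg n b :: 'k spoly set)"

definition pn :: "nat \<Rightarrow> 'k::field spoly" where
  "pn n = (\<Prod>ij \<in> {(i,j). 1 \<le> i \<and> i < j \<and> j \<le> n - 1}.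
             X (fst ij) (snd ij) * X n n + X (fst ij) n * X (snd ij) n)"

definition brk :: "nat \<Rightarrow> nat \<Rightarrow> nat \<times> nat \<Rightarrow> int" where
  "brk i j ab = (if ab = (i,i) then 1 else 0) + (if ab = (j,j) then 1 else 0)
                - (if ab = (min i j, max i j) then 2 else 0)"

definition Lprime :: "nat \<Rightarrow> (nat \<times> nat \<Rightarrow> int) set" where
  "Lprime n = {(\<lambda>ab. \<Sum>ij \<in> {(i,j). 1 \<le> i \<and> i < j \<and> j \<le> n}. c ij * brk (fst ij) (snd ij) ab)
              | c. True}"

definition fiber :: "nat \<Rightarrow> (nat \<Rightarrow> nat) \<Rightarrow> ((nat \<times> nat) \<Rightarrow>\<^sub>0 nat) set" where
  "fiber n b = {u \<in> Mons n. Vdeg u = b}"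

definition Lequiv :: "nat \<Rightarrow> (((nat \<times> nat) \<Rightarrow>\<^sub>0 nat) \<times> ((nat \<times> nat) \<Rightarrow>\<^sub>0 nat)) set" where
  "Lequiv n = {(u, v). (\<lambda>ab. int (Poly_Mapping.lookup u ab) - int (Poly_Mapping.lookup v ab)) \<in> Lprime n}"

text \<open>Sum of x^a over the equivalence classes a of V_n^{-1}[b] modulo L'_n
  (one representative monomial per class; well defined in R/J_n).\<close>
definition class_sum :: "nat \<Rightarrow> (nat \<Rightarrow> nat) \<Rightarrow> 'k::field spoly" where
  "class_sum n b = (\<Sum>C \<in> fiber n b // Lequiv n. Poly_Mapping.single (SOME u. u \<in> C) 1)"

definition pplus :: "nat \<Rightarrow> nat \<Rightarrow> 'k::field spoly" where
  "pplus n i = (if odd n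
     then class_sum n (\<lambda>k. if 1 \<le> k \<and> k \<le> n then (n - 2) + (if k = i then 1 else 0) else 0)
     else class_sum n (\<lambda>k. if 1 \<le> k \<and> k \<le> n then n - 2 else 0))"

end

theory Submission
  imports Defs "HOL-Library.FuncSet"
begin

text \<open>Modulo \<open>J\<^sub>n\<close> we have \<open>x\<^sub>i\<^sub>j\<^sup>2 \<equiv> x\<^sub>i\<^sub>i x\<^sub>j\<^sub>j\<close>, so a monomial is determined modulo \<open>J\<^sub>n\<close> by its
  \<open>V\<^sub>n\<close>-degree together with the set of off-diagonal variables occurring to an odd power, a graph
  on \<open>[n]\<close>. If \<open>x\<^sup>u\<close> and \<open>x\<^sup>u\<^sup>'\<close> have the same degree, their odd graphs differ by a graph \<open>\<delta>\<close> all of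
  whose vertex degrees are even. Both \<open>p\<^sub>n\<close> and \<open>p\<^sup>+\<^sub>n\<^sub>,\<^sub>i\<close> are sums of monomials of one degree
  whose odd graphs are permuted by symmetric difference with \<open>\<delta>\<close>: for \<open>p\<^sub>n\<close> through the choice
  of a term in each factor, for \<open>p\<^sup>+\<^sub>n\<^sub>,\<^sub>i\<close> because, all degrees being at least \<open>n - 2\<close>, every
  graph with the right degree parities occurs as the odd graph of a monomial in the fiber. Hence \<open>x\<^sup>u f \<equiv> x\<^sup>u\<^sup>' f\<close>
  modulo \<open>J\<^sub>n\<close>, and every graded piece of \<open>\<langle>f\<rangle>\<close> is spanned modulo \<open>J\<^sub>n\<close> by a single element.\<close>

alias lookup = Poly_Mapping.lookup
alias keys = Poly_Mapping.keys
alias single = Poly_Mapping.single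

abbreviation monomial :: "((nat \<times> nat) \<Rightarrow>\<^sub>0 nat) \<Rightarrow> 'k::field spoly" where
  "monomial u \<equiv> single u 1"

lemma poly_mapping_sum_single: "p = (\<Sum>u\<in>keys p. single u (lookup p u))"
proof (rule poly_mapping_eqI)
  fix v
  have "(\<Sum>u\<in>keys p. lookup (single u (lookup p u)) v) = (\<Sum>u\<in>keys p. if u = v then lookup p v else 0)"
    by (rule sum.cong) (auto simp: lookup_single when_def)
  then show "lookup p v = lookup (\<Sum>u\<in>keys p. single u (lookup p u)) v"
    by (simp add: lookup_sum in_keys_iff)
qed

lemma monomial_mult_sum: "monomial u * (\<Sum>s\<in>S. monomial (m s)) = (\<Sum>s\<in>S. monomial (u + m s))"
  by (simp add: sum_distrib_left mult_single)

lemma lookup_kscale: "lookup (kscale c p) u = c * lookup p u"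
  unfolding kscale_def mult_map_scale_conv_mult[symmetric]
  by (simp add: map.rep_eq when_def)

lemma vector_space_kscale: "vector_space (kscale :: 'k::field \<Rightarrow> 'k spoly \<Rightarrow> 'k spoly)"
  by unfold_locales (auto intro!: poly_mapping_eqI simp: lookup_kscale lookup_add algebra_simps)

interpretation ks: vector_space "kscale :: 'k::field \<Rightarrow> 'k spoly \<Rightarrow> 'k spoly"
  by (rule vector_space_kscale)

lemma kscale_monomial: "kscale c (monomial u) = single u c"
  by (simp add: kscale_def mult_single)

lemma kscale_mult: "kscale c (p * q) = kscale c p * (q :: 'k::field spoly)"
  by (simp add: kscale_def mult.assoc)

lemma (in vector_space) dim_le_dim_insert:
  assumes V: "V \<subseteq> span (insert w W)" and W: "W \<subseteq> span F" and F: "finite F"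
  shows "dim V \<le> dim W + 1"
proof -
  obtain B where B: "B \<subseteq> W" "independent B" "W \<subseteq> span B" "card B = dim W"
    using basis_exists[of W] by blast
  have "finite B"
    using independent_span_bound[OF F B(2)] B(1) W by blast
  have "span (insert w W) \<subseteq> span (insert w B)"
    using B(3) span_mono[of B "insert w B"]
    by (intro span_minimal) (auto intro: span_base)
  with V have "dim V \<le> card (insert w B)"
    by (intro dim_le_card) (auto simp: \<open>finite B\<close>)
  also have "\<dots> \<le> dim W + 1"
    using \<open>finite B\<close> B(4) by (simp add: card_insert_if)
  finally show ?thesis .
qed

definition Vcol :: "nat \<times> nat \<Rightarrow> nat \<Rightarrow> nat" where
  "Vcol ij k = (if fst ij = k then 1 else 0) + (if snd ij = k then 1 else 0)"

definition valid_pairs :: "nat \<Rightarrow> (nat \<times> nat) set" where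
  "valid_pairs n = {ij. valid_idx n ij}"

definition offdiag :: "nat \<Rightarrow> (nat \<times> nat) set" where
  "offdiag n = {(i,j). 1 \<le> i \<and> i < j \<and> j \<le> n}"

lemma offdiag_iff: "p \<in> offdiag n \<longleftrightarrow> 1 \<le> fst p \<and> fst p < snd p \<and> snd p \<le> n"
  by (cases p) (auto simp: offdiag_def)

lemma finite_valid_pairs [simp]: "finite (valid_pairs n)"
  by (rule finite_subset[of _ "{0..n} \<times> {0..n}"]) (auto simp: valid_pairs_def valid_idx_def)

lemma finite_offdiag [simp]: "finite (offdiag n)"
  by (rule finite_subset[of _ "{0..n} \<times> {0..n}"]) (auto simp: offdiag_def)

lemma valid_pairs_eq: "valid_pairs n = offdiag n \<union> (\<lambda>k. (k,k)) ` {1..n}"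
  by (auto simp: valid_pairs_def offdiag_def valid_idx_def)

lemma Vcol_diag: "Vcol (l,l) k = (if l = k then 2 else 0)"
  by (simp add: Vcol_def)

lemma Vdeg_eq_sum:
  assumes "finite A" "keys u \<subseteq> A"
  shows "Vdeg u k = (\<Sum>ij\<in>A. lookup u ij * Vcol ij k)"
  unfolding Vdeg_def Vcol_def
  by (rule sum.mono_neutral_left) (use assms in \<open>auto simp: in_keys_iff\<close>)

lemma Vdeg_add: "Vdeg (u + v) k = Vdeg u k + Vdeg v k"
proof -
  let ?A = "keys u \<union> keys v"
  have "keys (u + v) \<subseteq> ?A" by (rule keys_add)
  then show ?thesis
    using Vdeg_eq_sum[of ?A] by (simp add: lookup_add algebra_simps sum.distrib)
qed

lemma Vdeg_zero [simp]: "Vdeg 0 k = 0"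
  by (simp add: Vdeg_def)

lemma Vdeg_single: "Vdeg (single ij c) k = c * Vcol ij k"
  using Vdeg_eq_sum[of "{ij}" "single ij c" k] by simp

lemma Vdeg_sum: "Vdeg (sum f A) k = (\<Sum>x\<in>A. Vdeg (f x) k)"
  by (induction A rule: infinite_finite_induct) (auto simp: Vdeg_add)

lemma Mons_iff_keys: "u \<in> Mons n \<longleftrightarrow> keys u \<subseteq> valid_pairs n"
  by (auto simp: Mons_def valid_pairs_def)

lemma Mons_add: "u \<in> Mons n \<Longrightarrow> v \<in> Mons n \<Longrightarrow> u + v \<in> Mons n"
  using keys_add[of u v] by (auto simp: Mons_iff_keys)

lemma Mons_single: "valid_idx n ij \<Longrightarrow> single ij c \<in> Mons n"
  by (auto simp: Mons_def)

lemma Mons_zero [simp]: "0 \<in> Mons n"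
  by (simp add: Mons_def)

lemma Mons_sum: "(\<And>x. x \<in> A \<Longrightarrow> f x \<in> Mons n) \<Longrightarrow> sum f A \<in> Mons n"
  by (induction A rule: infinite_finite_induct) (auto intro: Mons_add)

lemma lookup_Mons_invalid: "u \<in> Mons n \<Longrightarrow> \<not> valid_idx n ij \<Longrightarrow> lookup u ij = 0"
  by (auto simp: Mons_def in_keys_iff)

lemma Vdeg_Mons: "u \<in> Mons n \<Longrightarrow> Vdeg u k = (\<Sum>ij\<in>valid_pairs n. lookup u ij * Vcol ij k)"
  by (rule Vdeg_eq_sum) (auto simp: Mons_iff_keys)

lemma Vdeg_diag_offdiag:
  assumes u: "u \<in> Mons n"
  shows "Vdeg u k = 2 * lookup u (k,k) + (\<Sum>p\<in>offdiag n. lookup u p * Vcol p k)"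
proof -
  have "Vdeg u k = (\<Sum>p\<in>offdiag n. lookup u p * Vcol p k)
      + (\<Sum>p\<in>(\<lambda>l. (l,l)) ` {1..n}. lookup u p * Vcol p k)"
    unfolding Vdeg_Mons[OF u] valid_pairs_eq
    by (rule sum.union_disjoint) (auto simp: offdiag_iff)
  also have "(\<Sum>p\<in>(\<lambda>l. (l,l)) ` {1..n}. lookup u p * Vcol p k)
      = (\<Sum>l\<in>{1..n}. lookup u (l,l) * Vcol (l,l) k)"
    by (subst sum.reindex) (auto simp: inj_on_def)
  also have "\<dots> = (\<Sum>l\<in>{1..n}. if l = k then 2 * lookup u (k,k) else 0)"
    by (rule sum.cong) (auto simp: Vcol_diag)
  also have "\<dots> = 2 * lookup u (k,k)"
    using lookup_Mons_invalid[OF u, of "(k,k)"] by (auto simp: valid_idx_def)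
  finally show ?thesis by simp
qed

lemma lookup_le_Vdeg:
  assumes "u \<in> Mons n" "ij \<in> valid_pairs n"
  shows "lookup u ij \<le> Vdeg u (fst ij)"
proof -
  have "lookup u ij \<le> lookup u ij * Vcol ij (fst ij)"
    by (simp add: Vcol_def)
  also have "\<dots> \<le> (\<Sum>p\<in>valid_pairs n. lookup u p * Vcol p (fst ij))"
    by (rule member_le_sum) (use assms in auto)
  finally show ?thesis by (simp add: Vdeg_Mons[OF assms(1)])
qed

lemma finite_fiber: "finite (fiber n b)"
proof (rule inj_on_finite)
  let ?f = "\<lambda>u. restrict (lookup u) (valid_pairs n)"
  show "inj_on ?f (fiber n b)"
  proof (rule inj_onI)
    fix u v assume "u \<in> fiber n b" "v \<in> fiber n b" and eq: "?f u = ?f v"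
    then have "u \<in> Mons n" "v \<in> Mons n" by (auto simp: fiber_def)
    then show "u = v"
      using fun_cong[OF eq] lookup_Mons_invalid[of u n] lookup_Mons_invalid[of v n]
      by (intro poly_mapping_eqI) (metis restrict_apply' valid_pairs_def mem_Collect_eq)
  qed
  show "?f ` fiber n b \<subseteq> PiE (valid_pairs n) (\<lambda>ij. {0..b (fst ij)})"
    using lookup_le_Vdeg by (fastforce simp: fiber_def)
  show "finite (PiE (valid_pairs n) (\<lambda>ij. {0..b (fst ij)}))"
    by (rule finite_PiE) auto
qed

lemma Rn_add: "p \<in> Rn n \<Longrightarrow> q \<in> Rn n \<Longrightarrow> p + q \<in> Rn n"
  using keys_add[of p q] by (auto simp: Rn_def)

lemma Rn_diff: "p \<in> Rn n \<Longrightarrow> q \<in> Rn n \<Longrightarrow> p - q \<in> Rn n"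
  using keys_diff[of p q] by (auto simp: Rn_def)

lemma Rn_zero [simp]: "0 \<in> Rn n"
  by (simp add: Rn_def)

lemma Rn_mult:
  assumes "p \<in> Rn n" "q \<in> Rn n"
  shows "(p * q :: 'k::field spoly) \<in> Rn n"
proof -
  have "u \<in> Mons n" if u: "u \<in> keys (p * q)" for u
  proof -
    obtain a b where "u = a + b" "a \<in> keys p" "b \<in> keys q"
      using keys_mult[of p q] u by blast
    then show ?thesis using assms by (auto simp: Rn_def intro: Mons_add)
  qed
  then show ?thesis by (simp add: Rn_def)
qed

lemma Rn_monomial: "u \<in> Mons n \<Longrightarrow> single u c \<in> Rn n"
  by (auto simp: Rn_def)

lemma Rn_sum: "(\<And>x. x \<in> A \<Longrightarrow> f x \<in> Rn n) \<Longrightarrow> sum f A \<in> Rn n"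
  by (induction A rule: infinite_finite_induct) (auto intro: Rn_add)

lemma Rn_X: "1 \<le> i \<Longrightarrow> i \<le> n \<Longrightarrow> 1 \<le> j \<Longrightarrow> j \<le> n \<Longrightarrow> (X i j :: 'k::field spoly) \<in> Rn n"
  unfolding X_def by (intro Rn_monomial Mons_single) (auto simp: valid_idx_def)

abbreviation minor :: "nat \<times> nat \<Rightarrow> 'k::field spoly" where
  "minor ij \<equiv> X (fst ij) (fst ij) * X (snd ij) (snd ij) - X (fst ij) (snd ij) ^ 2"

lemma Jn_eq: "Jn n = {\<Sum>ij\<in>offdiag n. q ij * minor ij | q. \<forall>ij. q ij \<in> Rn n}"
  unfolding Jn_def offdiag_def ..

lemma Jn_add:
  assumes "h \<in> Jn n" "h' \<in> Jn n"
  shows "h + h' \<in> Jn n"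
proof -
  obtain q q' where "\<forall>ij. q ij \<in> Rn n" "\<forall>ij. q' ij \<in> Rn n"
    and "h = (\<Sum>ij\<in>offdiag n. q ij * minor ij)" "h' = (\<Sum>ij\<in>offdiag n. q' ij * minor ij)"
    using assms unfolding Jn_eq by blast
  then show ?thesis
    unfolding Jn_eq by (intro CollectI exI[of _ "\<lambda>ij. q ij + q' ij"]) (simp add: Rn_add distrib_right sum.distrib)
qed

lemma Jn_mult:
  assumes "r \<in> Rn n" "h \<in> Jn n"
  shows "r * h \<in> Jn n"
proof -
  obtain q where "\<forall>ij. q ij \<in> Rn n" "h = (\<Sum>ij\<in>offdiag n. q ij * minor ij)"
    using assms(2) unfolding Jn_eq by blast
  then show ?thesis
    unfolding Jn_eq using assms(1)
    by (intro CollectI exI[of _ "\<lambda>ij. r * q ij"]) (simp add: Rn_mult sum_distrib_left mult.assoc)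
qed

lemma Jn_uminus: "h \<in> Jn n \<Longrightarrow> - h \<in> Jn n"
  using Jn_mult[of "- 1" n h] by (simp add: Rn_def keys_one)

lemma Jn_diff: "h \<in> Jn n \<Longrightarrow> h' \<in> Jn n \<Longrightarrow> h - h' \<in> Jn n"
  using Jn_add[OF _ Jn_uminus] by fastforce

lemma Jn_zero [simp]: "0 \<in> Jn n"
  unfolding Jn_eq by (rule CollectI, rule exI[of _ "\<lambda>_. 0"]) simp

lemma Jn_sum: "(\<And>x. x \<in> A \<Longrightarrow> f x \<in> Jn n) \<Longrightarrow> sum f A \<in> Jn n"
  by (induction A rule: infinite_finite_induct) (auto intro: Jn_add)

lemma Jn_minor:
  assumes "ij \<in> offdiag n" "r \<in> Rn n"
  shows "r * minor ij \<in> Jn n"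
proof -
  have "(\<Sum>p\<in>offdiag n. (if p = ij then r else 0) * minor p) = (\<Sum>p\<in>offdiag n. if p = ij then r * minor ij else 0)"
    by (rule sum.cong) auto
  also have "\<dots> = r * minor ij"
    using assms(1) by simp
  finally have "r * minor ij = (\<Sum>p\<in>offdiag n. (if p = ij then r else 0) * minor p)" ..
  then show ?thesis
    unfolding Jn_eq using assms(2) by (intro CollectI exI[of _ "\<lambda>p. if p = ij then r else 0"]) auto
qed

lemma minor_Rn: "ij \<in> offdiag n \<Longrightarrow> minor ij \<in> Rn n"
  by (auto simp: offdiag_iff power2_eq_square intro!: Rn_diff Rn_mult Rn_X)

lemma Jn_subset_Rn: "Jn n \<subseteq> Rn n"
  unfolding Jn_eq by (auto intro!: Rn_sum Rn_mult minor_Rn)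

subsection \<open>Monomials modulo \<open>J\<^sub>n\<close>\<close>

definition odd_offdiag :: "nat \<Rightarrow> ((nat \<times> nat) \<Rightarrow>\<^sub>0 nat) \<Rightarrow> (nat \<times> nat) set" where
  "odd_offdiag n u = {p \<in> offdiag n. odd (lookup u p)}"

lemma odd_offdiag_subset: "odd_offdiag n u \<subseteq> offdiag n"
  by (auto simp: odd_offdiag_def)

lemma minor_eq: "i < j \<Longrightarrow> (X i i * X j j - X i j ^ 2 :: 'k::field spoly)
    = monomial (single (i,i) 1 + single (j,j) 1) - monomial (single (i,j) 2)"
  by (simp add: X_def mult_single power2_eq_square single_add[symmetric] numeral_2_eq_2)

lemma monomial_square_reduction:
  assumes ij: "(i,j) \<in> offdiag n" and v: "v \<in> Mons n"
  shows "monomial (v + single (i,j) 2) - monomial (v + single (i,i) 1 + single (j,j) 1) \<in> (Jn n :: 'k::field spoly set)"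
proof -
  have "monomial (v + single (i,j) 2) - monomial (v + single (i,i) 1 + single (j,j) 1)
      = - (monomial v * (minor (i,j) :: 'k spoly))"
    using ij by (simp only: fst_conv snd_conv minor_eq offdiag_iff) (simp add: mult_single algebra_simps)
  also have "\<dots> \<in> Jn n"
    by (intro Jn_uminus Jn_minor[OF ij] Rn_monomial v)
  finally show ?thesis .
qed

lemma exists_reduced_monomial:
  assumes "u \<in> Mons n"
  shows "\<exists>w \<in> Mons n. Vdeg w = Vdeg u \<and> (\<forall>p\<in>offdiag n. lookup w p = lookup u p mod 2) \<and>
     monomial u - monomial w \<in> (Jn n :: 'k::field spoly set)"
  using assms
proof (induction u rule: measure_induct_rule[where f = "\<lambda>u. \<Sum>p\<in>offdiag n. lookup u p"])
  case (less u)
  show ?case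
  proof (cases "\<exists>p\<in>offdiag n. 2 \<le> lookup u p")
    case False
    then show ?thesis using less.prems by (intro bexI[of _ u]) auto
  next
    case True
    then obtain i j where ij: "(i,j) \<in> offdiag n" and ge: "2 \<le> lookup u (i,j)" by auto
    define v where "v = Poly_Mapping.update (i,j) (lookup u (i,j) - 2) u"
    have u: "u = v + single (i,j) 2"
      by (rule poly_mapping_eqI) (use ge in \<open>auto simp: v_def lookup_add lookup_update lookup_single when_def\<close>)
    have v: "v \<in> Mons n"
      using less.prems ij by (auto simp: Mons_def v_def keys_update offdiag_def valid_idx_def)
    define u' where "u' = v + single (i,i) 1 + single (j,j) 1"
    have u': "u' \<in> Mons n"
      using ij v by (auto simp: u'_def offdiag_def valid_idx_def intro!: Mons_add Mons_single)
    have lookup_u': "lookup u' p = (if p = (i,j) then lookup u p - 2 else lookup u p)"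
      if "p \<in> offdiag n" for p
      using that ij by (auto simp: u u'_def lookup_add lookup_single when_def offdiag_def)
    have "(\<Sum>p\<in>offdiag n. lookup u' p) < (\<Sum>p\<in>offdiag n. lookup u p)"
      using ij ge lookup_u' by (intro sum_strict_mono_ex1) auto
    from less.IH[OF this u'] obtain w where w: "w \<in> Mons n" "Vdeg w = Vdeg u'"
      "\<forall>p\<in>offdiag n. lookup w p = lookup u' p mod 2" "monomial u' - monomial w \<in> (Jn n :: 'k spoly set)"
      by blast
    have "Vdeg u' = Vdeg u"
      by (auto simp: u u'_def Vdeg_add Vdeg_single Vcol_def)
    moreover have "\<forall>p\<in>offdiag n. lookup w p = lookup u p mod 2"
      using w(3) lookup_u' ge by (auto simp: le_mod_geq)
    moreover have "monomial u - monomial w \<in> (Jn n :: 'k spoly set)"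
      using Jn_add[OF monomial_square_reduction[OF ij v] w(4)] by (simp add: u u'_def)
    ultimately show ?thesis using w(1,2) by auto
  qed
qed

lemma Mons_eqI:
  assumes u: "u \<in> Mons n" and v: "v \<in> Mons n" and deg: "Vdeg u = Vdeg v"
    and off: "\<And>p. p \<in> offdiag n \<Longrightarrow> lookup u p = lookup v p"
  shows "u = v"
proof (rule poly_mapping_eqI)
  fix ab :: "nat \<times> nat"
  obtain a b where ab: "ab = (a,b)" by (cases ab)
  consider "ab \<in> offdiag n" | "a = b" | "\<not> valid_idx n ab"
    by (cases "a = b"; cases "ab \<in> offdiag n") (auto simp: ab offdiag_def valid_idx_def)
  then show "lookup u ab = lookup v ab"
  proof cases
    case 2
    have "(\<Sum>p\<in>offdiag n. lookup u p * Vcol p a) = (\<Sum>p\<in>offdiag n. lookup v p * Vcol p a)"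
      by (rule sum.cong) (auto simp: off)
    then show ?thesis
      using fun_cong[OF deg, of a] Vdeg_diag_offdiag[OF u, of a] Vdeg_diag_offdiag[OF v, of a] 2 ab by simp
  qed (auto simp: off lookup_Mons_invalid[OF u] lookup_Mons_invalid[OF v])
qed

lemma monomial_diff_in_Jn:
  assumes u: "u \<in> Mons n" and v: "v \<in> Mons n" and "Vdeg u = Vdeg v"
    and "odd_offdiag n u = odd_offdiag n v"
  shows "monomial u - monomial v \<in> (Jn n :: 'k::field spoly set)"
proof -
  obtain wu where wu: "wu \<in> Mons n" "Vdeg wu = Vdeg u"
      "\<forall>p\<in>offdiag n. lookup wu p = lookup u p mod 2" "monomial u - monomial wu \<in> (Jn n :: 'k spoly set)"
    using exists_reduced_monomial[OF u] by blast
  obtain wv where wv: "wv \<in> Mons n" "Vdeg wv = Vdeg v"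
      "\<forall>p\<in>offdiag n. lookup wv p = lookup v p mod 2" "monomial v - monomial wv \<in> (Jn n :: 'k spoly set)"
    using exists_reduced_monomial[OF v] by blast
  have "lookup u p mod 2 = lookup v p mod 2" if "p \<in> offdiag n" for p
    using assms(4) that unfolding odd_offdiag_def set_eq_iff by (metis (mono_tags) mem_Collect_eq odd_iff_mod_2_eq_one mod2_eq_if)
  then have "wu = wv"
    using wu wv assms(3) by (intro Mons_eqI[of _ n]) auto
  then show ?thesis
    using Jn_diff[OF wu(4) wv(4)] by simp
qed

subsection \<open>Homogeneity\<close>

lift_definition filter_keys :: "('a \<Rightarrow> bool) \<Rightarrow> ('a \<Rightarrow>\<^sub>0 'b::zero) \<Rightarrow> 'a \<Rightarrow>\<^sub>0 'b"
  is "\<lambda>P f a. if P a then f a else 0"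
  by (erule finite_subset[rotated]) auto

lemma lookup_filter_keys: "lookup (filter_keys P f) a = (if P a then lookup f a else 0)"
  by transfer simp

lemma keys_filter_keys: "keys (filter_keys P f) = {a \<in> keys f. P a}"
  by (auto simp: in_keys_iff lookup_filter_keys split: if_splits)

lemma filter_keys_add: "filter_keys P (f + g) = filter_keys P f + filter_keys P g"
  by (rule poly_mapping_eqI) (simp add: lookup_filter_keys lookup_add)

lemma filter_keys_sum: "filter_keys P (sum f A) = (\<Sum>x\<in>A. filter_keys P (f x))"
  by (rule poly_mapping_eqI) (simp add: lookup_filter_keys lookup_sum)

lemma filter_keys_single: "filter_keys P (single a c) = (if P a then single a c else 0)"
  by (rule poly_mapping_eqI) (auto simp: lookup_filter_keys lookup_single when_def)

lemma filter_keys_id: "(\<And>a. a \<in> keys f \<Longrightarrow> P a) \<Longrightarrow> filter_keys P f = f"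
  by (rule poly_mapping_eqI) (auto simp: lookup_filter_keys in_keys_iff)

lemma Rn_filter_keys: "p \<in> Rn n \<Longrightarrow> filter_keys P p \<in> Rn n"
  by (auto simp: Rn_def keys_filter_keys)

definition homogeneous :: "'k::field spoly \<Rightarrow> (nat \<Rightarrow> nat) \<Rightarrow> bool" where
  "homogeneous g D \<longleftrightarrow> (\<forall>v\<in>keys g. Vdeg v = D)"

lemma filter_keys_mult_homogeneous:
  assumes "homogeneous g D"
  shows "filter_keys (\<lambda>w. Vdeg w = b) (q * g) = filter_keys (\<lambda>u. (\<lambda>k. Vdeg u k + D k) = b) q * g"
proof -
  let ?P = "\<lambda>u. (\<lambda>k. Vdeg u k + D k) = b"
  let ?t = "\<lambda>u v. single (u + v) (lookup q u * lookup g v)"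
  have expand: "r * g = (\<Sum>u\<in>keys r. \<Sum>v\<in>keys g. single u (lookup r u) * single v (lookup g v))" for r
    by (subst poly_mapping_sum_single[of r], subst poly_mapping_sum_single[of g]) (simp add: sum_product)
  have "Vdeg (u + v) = (\<lambda>k. Vdeg u k + D k)" if "v \<in> keys g" for u v
    using assms that by (auto simp: homogeneous_def Vdeg_add)
  then have "filter_keys (\<lambda>w. Vdeg w = b) (q * g) = (\<Sum>u\<in>keys q. \<Sum>v\<in>keys g. if ?P u then ?t u v else 0)"
    unfolding expand by (simp add: filter_keys_sum filter_keys_single mult_single cong: sum.cong)
  also have "\<dots> = (\<Sum>u\<in>keys q. \<Sum>v\<in>keys g. filter_keys ?P (single u (lookup q u)) * single v (lookup g v))"
    by (intro sum.cong refl) (simp add: filter_keys_single mult_single)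
  also have "\<dots> = (\<Sum>u\<in>keys q. filter_keys ?P (single u (lookup q u))) * (\<Sum>v\<in>keys g. single v (lookup g v))"
    by (rule sum_product[symmetric])
  also have "\<dots> = filter_keys ?P q * g"
    unfolding filter_keys_sum[symmetric] poly_mapping_sum_single[symmetric] ..
  finally show ?thesis .
qed

lemma homogeneous_minor:
  assumes "ij \<in> offdiag n"
  shows "homogeneous (minor ij :: 'k::field spoly) (\<lambda>k. 2 * Vcol ij k)"
proof -
  obtain i j where ij: "ij = (i,j)" "i < j" using assms by (cases ij) (auto simp: offdiag_def)
  have "keys (minor ij :: 'k spoly) \<subseteq> {single (i,i) 1 + single (j,j) 1, single (i,j) 2}"
    unfolding ij fst_conv snd_conv minor_eq[OF ij(2)] by (rule order_trans[OF keys_diff]) auto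
  then show ?thesis
    using ij by (auto simp: homogeneous_def fun_eq_iff Vdeg_add Vdeg_single Vcol_def)
qed

lemma Jn_filter_keys:
  assumes "h \<in> Jn n"
  shows "filter_keys (\<lambda>w. Vdeg w = b) h \<in> Jn n"
proof -
  obtain q where q: "\<forall>ij. q ij \<in> Rn n" and h: "h = (\<Sum>ij\<in>offdiag n. q ij * minor ij)"
    using assms unfolding Jn_eq by blast
  define q' where "q' ij = filter_keys (\<lambda>u. (\<lambda>k. Vdeg u k + 2 * Vcol ij k) = b) (q ij)" for ij
  have "filter_keys (\<lambda>w. Vdeg w = b) h = (\<Sum>ij\<in>offdiag n. q' ij * minor ij)"
    unfolding h filter_keys_sum q'_def by (intro sum.cong refl filter_keys_mult_homogeneous homogeneous_minor)
  also have "\<dots> \<in> Jn n"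
    unfolding Jn_eq using q by (auto simp: q'_def Rn_filter_keys)
  finally show ?thesis .
qed

lemma Rdeg_iff: "p \<in> Rdeg n b \<longleftrightarrow> (\<forall>u\<in>keys p. u \<in> Mons n \<and> Vdeg u = b)"
  by (auto simp: Rdeg_def Rn_def)

lemma Rdeg_diff: "p \<in> Rdeg n b \<Longrightarrow> q \<in> Rdeg n b \<Longrightarrow> p - q \<in> Rdeg n b"
  using keys_diff[of p q] by (auto simp: Rdeg_iff)

lemma monomial_mult_Rdeg:
  assumes "u \<in> Mons n" "f \<in> Rn n" "homogeneous f D"
  shows "monomial u * f \<in> Rdeg n (\<lambda>k. Vdeg u k + D k)"
  using keys_mult[of "monomial u" f] assms
  by (auto simp: Rdeg_iff Rn_def homogeneous_def fun_eq_iff Mons_add Vdeg_add)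

lemma Rdeg_subset_span_fiber: "Rdeg n b \<subseteq> ks.span (monomial ` fiber n b :: 'k::field spoly set)"
proof
  fix p :: "'k spoly" assume p: "p \<in> Rdeg n b"
  have "p = (\<Sum>u\<in>keys p. kscale (lookup p u) (monomial u))"
    by (subst poly_mapping_sum_single) (simp add: kscale_monomial)
  also have "\<dots> \<in> ks.span (monomial ` fiber n b)"
    using p by (intro ks.span_sum ks.span_scale ks.span_base) (auto simp: Rdeg_iff fiber_def)
  finally show "p \<in> ks.span (monomial ` fiber n b)" .
qed

lemma mult_eq_sum_kscale: "q * f = (\<Sum>u\<in>keys q. kscale (lookup q u) (monomial u * f :: 'k::field spoly))"
  by (subst poly_mapping_sum_single[of q]) (simp add: sum_distrib_right kscale_mult kscale_monomial)

lemma gen_mod_Rdeg_decompose: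
  assumes "z \<in> gen_mod n f \<inter> Rdeg n b" and "homogeneous f D"
  obtains q h where "q \<in> Rn n" "\<forall>u\<in>keys q. (\<lambda>k. Vdeg u k + D k) = b"
    and "h \<in> Jn n \<inter> Rdeg n b" and "z = q * f + h"
proof -
  let ?deg_b = "\<lambda>w. Vdeg w = b" and ?P = "\<lambda>u. (\<lambda>k. Vdeg u k + D k) = b"
  obtain q h where q: "q \<in> Rn n" and h: "h \<in> Jn n" and z: "z = q * f + h"
    using assms(1) by (auto simp: gen_mod_def)
  have "z = filter_keys ?deg_b z"
    using assms(1) by (intro filter_keys_id[symmetric]) (auto simp: Rdeg_iff)
  also have "\<dots> = filter_keys ?P q * f + filter_keys ?deg_b h"
    unfolding z filter_keys_add filter_keys_mult_homogeneous[OF assms(2)] ..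
  finally have "z = filter_keys ?P q * f + filter_keys ?deg_b h" .
  moreover have "filter_keys ?deg_b h \<in> Jn n \<inter> Rdeg n b"
    using Jn_filter_keys[OF h] Jn_subset_Rn h by (auto simp: Rdeg_iff Rn_def keys_filter_keys)
  ultimately show thesis
    using q by (intro that[of "filter_keys ?P q"]) (auto simp: Rn_filter_keys keys_filter_keys)
qed

lemma exists_monomial_mult_span:
  assumes f: "f \<in> Rn n" "homogeneous f D"
    and cong: "\<And>u u'. u \<in> Mons n \<Longrightarrow> u' \<in> Mons n \<Longrightarrow> Vdeg u = Vdeg u' \<Longrightarrow>
        monomial u * f - monomial u' * f \<in> (Jn n :: 'k::field spoly set)"
  shows "\<exists>w. \<forall>u\<in>Mons n. (\<lambda>k. Vdeg u k + D k) = b \<longrightarrow>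
    monomial u * f \<in> ks.span (insert w (Jn n \<inter> Rdeg n b))"
proof (cases "\<exists>u0\<in>Mons n. (\<lambda>k. Vdeg u0 k + D k) = b")
  case True
  then obtain u0 where u0: "u0 \<in> Mons n" "(\<lambda>k. Vdeg u0 k + D k) = b" by blast
  have "monomial u * f \<in> ks.span (insert (monomial u0 * f) (Jn n \<inter> Rdeg n b))"
    if u: "u \<in> Mons n" "(\<lambda>k. Vdeg u k + D k) = b" for u
  proof -
    from u(2) u0(2) have "(\<lambda>k. Vdeg u k + D k) = (\<lambda>k. Vdeg u0 k + D k)"
      by simp
    then have "Vdeg u = Vdeg u0"
      by (simp add: fun_eq_iff)
    then have "monomial u * f - monomial u0 * f \<in> Jn n"
      using u u0 cong by simp
    moreover have "monomial u * f - monomial u0 * f \<in> Rdeg n b"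
      using monomial_mult_Rdeg[OF u(1) f] monomial_mult_Rdeg[OF u0(1) f] u(2) u0(2) by (simp add: Rdeg_diff)
    ultimately have "monomial u * f - monomial u0 * f \<in> ks.span (insert (monomial u0 * f) (Jn n \<inter> Rdeg n b))"
      by (intro ks.span_base insertI2 IntI)
    from ks.span_add[OF this ks.span_base[OF insertI1]] show ?thesis
      by simp
  qed
  then show ?thesis by blast
qed auto

lemma gen_mod_Rdeg_subset_span:
  assumes f: "f \<in> Rn n" "homogeneous f D"
    and cong: "\<And>u u'. u \<in> Mons n \<Longrightarrow> u' \<in> Mons n \<Longrightarrow> Vdeg u = Vdeg u' \<Longrightarrow>
        monomial u * f - monomial u' * f \<in> (Jn n :: 'k::field spoly set)"
  shows "\<exists>w. gen_mod n f \<inter> Rdeg n b \<subseteq> ks.span (insert w (Jn n \<inter> Rdeg n b))"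
proof -
  let ?J = "Jn n \<inter> Rdeg n b"
  obtain w where w: "\<forall>u\<in>Mons n. (\<lambda>k. Vdeg u k + D k) = b \<longrightarrow> monomial u * f \<in> ks.span (insert w ?J)"
    using exists_monomial_mult_span[OF assms, of b] ..
  show ?thesis
  proof (rule exI[of _ w], rule subsetI)
    fix z assume z: "z \<in> gen_mod n f \<inter> Rdeg n b"
    obtain q h where q: "q \<in> Rn n" "\<forall>u\<in>keys q. (\<lambda>k. Vdeg u k + D k) = b"
      and h: "h \<in> ?J" and z: "z = q * f + h"
      by (rule gen_mod_Rdeg_decompose[OF z f(2)])
    have "monomial u * f \<in> ks.span (insert w ?J)" if "u \<in> keys q" for u
      using q w that by (simp add: Rn_def)
    then have "q * f \<in> ks.span (insert w ?J)"
      by (subst mult_eq_sum_kscale) (intro ks.span_sum ks.span_scale)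
    moreover have "h \<in> ks.span (insert w ?J)"
      using h by (intro ks.span_base insertI2)
    ultimately show "z \<in> ks.span (insert w ?J)"
      unfolding z by (rule ks.span_add)
  qed
qed

lemma hilb_le_1:
  assumes "f \<in> Rn n" "homogeneous f D"
    and "\<And>u u'. u \<in> Mons n \<Longrightarrow> u' \<in> Mons n \<Longrightarrow> Vdeg u = Vdeg u' \<Longrightarrow>
        monomial u * f - monomial u' * f \<in> (Jn n :: 'k::field spoly set)"
  shows "hilb n f b \<le> 1"
proof -
  obtain w where V: "gen_mod n f \<inter> Rdeg n b \<subseteq> ks.span (insert w (Jn n \<inter> Rdeg n b))"
    using gen_mod_Rdeg_subset_span[OF assms] by blast
  have W: "Jn n \<inter> Rdeg n b \<subseteq> ks.span (monomial ` fiber n b :: 'k spoly set)"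
    using Rdeg_subset_span_fiber by blast
  have F: "finite (monomial ` fiber n b :: 'k spoly set)"
    by (simp add: finite_fiber)
  have "ks.dim (gen_mod n f \<inter> Rdeg n b) \<le> ks.dim (Jn n \<inter> Rdeg n b :: 'k spoly set) + 1"
    by (rule ks.dim_le_dim_insert[OF V W F])
  then show ?thesis by (simp add: hilb_def)
qed

definition sym_diff :: "'a set \<Rightarrow> 'a set \<Rightarrow> 'a set" where
  "sym_diff A B = (A - B) \<union> (B - A)"

definition graph_deg :: "(nat \<times> nat) set \<Rightarrow> nat \<Rightarrow> nat" where
  "graph_deg \<tau> k = (\<Sum>p\<in>\<tau>. Vcol p k)"

lemma even_sum_sym_diff:
  assumes "finite A" "finite B"
  shows "even (sum g (sym_diff A B) :: nat) \<longleftrightarrow> even (sum g A + sum g B)"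
proof -
  have "sum g (sym_diff A B) = sum g (A - B) + sum g (B - A)"
    unfolding sym_diff_def by (rule sum.union_disjoint) (use assms in auto)
  moreover have "sum g A = sum g (A \<inter> B) + sum g (A - B)" "sum g B = sum g (A \<inter> B) + sum g (B - A)"
    using sum.Int_Diff[OF assms(1), of g B] sum.Int_Diff[OF assms(2), of g A] by (simp_all add: Int_commute)
  ultimately show ?thesis by presburger
qed

lemma even_graph_deg_sym_diff:
  "finite \<sigma> \<Longrightarrow> finite \<tau> \<Longrightarrow> even (graph_deg (sym_diff \<sigma> \<tau>) k) \<longleftrightarrow> even (graph_deg \<sigma> k + graph_deg \<tau> k)"
  unfolding graph_deg_def by (rule even_sum_sym_diff)

lemma odd_offdiag_add: "odd_offdiag n (u + v) = sym_diff (odd_offdiag n u) (odd_offdiag n v)"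
  by (auto simp: odd_offdiag_def sym_diff_def lookup_add)

lemma even_Vdeg_iff:
  assumes "u \<in> Mons n"
  shows "even (Vdeg u k) \<longleftrightarrow> even (graph_deg (odd_offdiag n u) k)"
proof -
  have "lookup u p * Vcol p k = 2 * (lookup u p div 2 * Vcol p k) + lookup u p mod 2 * Vcol p k" for p
    by (simp only: mult.assoc[symmetric] add_mult_distrib[symmetric] mult_div_mod_eq)
  then have "(\<Sum>p\<in>offdiag n. lookup u p * Vcol p k)
      = 2 * (\<Sum>p\<in>offdiag n. lookup u p div 2 * Vcol p k) + (\<Sum>p\<in>offdiag n. lookup u p mod 2 * Vcol p k)"
    by (simp add: sum_distrib_left sum.distrib)
  moreover have "(\<Sum>p\<in>offdiag n. lookup u p mod 2 * Vcol p k) = graph_deg (odd_offdiag n u) k"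
    unfolding graph_deg_def odd_offdiag_def by (simp add: sum.inter_filter mod2_eq_if) (rule sum.cong; simp)
  ultimately show ?thesis
    by (simp add: Vdeg_diag_offdiag[OF assms])
qed

lemma even_graph_deg_odd_offdiag_diff:
  assumes "u \<in> Mons n" "u' \<in> Mons n" "Vdeg u = Vdeg u'"
  shows "even (graph_deg (sym_diff (odd_offdiag n u) (odd_offdiag n u')) k)"
  using even_Vdeg_iff[OF assms(1), of k] even_Vdeg_iff[OF assms(2), of k] assms(3)
  by (simp add: even_graph_deg_sym_diff finite_subset[OF odd_offdiag_subset])

text \<open>Multiplying by \<open>x\<^sup>u\<close> instead of \<open>x\<^sup>u\<^sup>'\<close> shifts the odd parts of all terms by the same
  symmetric difference; when \<open>\<pi>\<close> undoes this shift, the two products agree modulo \<open>J\<^sub>n\<close> term by term.\<close>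
lemma monomial_mult_sum_diff_in_Jn:
  assumes m: "\<And>s. s \<in> S \<Longrightarrow> m s \<in> Mons n \<and> Vdeg (m s) = D"
    and u: "u \<in> Mons n" "u' \<in> Mons n" "Vdeg u = Vdeg u'"
    and \<pi>: "bij_betw \<pi> S S"
    and par: "\<And>s. s \<in> S \<Longrightarrow> odd_offdiag n (m (\<pi> s))
        = sym_diff (odd_offdiag n (m s)) (sym_diff (odd_offdiag n u) (odd_offdiag n u'))"
  shows "monomial u * (\<Sum>s\<in>S. monomial (m s)) - monomial u' * (\<Sum>s\<in>S. monomial (m s))
    \<in> (Jn n :: 'k::field spoly set)"
proof -
  have "monomial u' * (\<Sum>s\<in>S. monomial (m s)) = (\<Sum>s\<in>S. monomial (u' + m (\<pi> s)) :: 'k spoly)"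
    unfolding monomial_mult_sum by (rule sum.reindex_bij_betw[OF \<pi>, symmetric])
  then have "monomial u * (\<Sum>s\<in>S. monomial (m s)) - monomial u' * (\<Sum>s\<in>S. monomial (m s))
      = (\<Sum>s\<in>S. monomial (u + m s) - monomial (u' + m (\<pi> s)) :: 'k spoly)"
    by (simp add: monomial_mult_sum sum_subtractf)
  also have "\<dots> \<in> Jn n"
  proof (rule Jn_sum, rule monomial_diff_in_Jn)
    fix s assume s: "s \<in> S"
    then have "\<pi> s \<in> S" using \<pi> by (auto simp: bij_betw_def)
    then show "u + m s \<in> Mons n" "u' + m (\<pi> s) \<in> Mons n" "Vdeg (u + m s) = Vdeg (u' + m (\<pi> s))"
      using s m u by (auto simp: Mons_add Vdeg_add fun_eq_iff)
    show "odd_offdiag n (u + m s) = odd_offdiag n (u' + m (\<pi> s))"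
      unfolding odd_offdiag_add par[OF s] by (auto simp: sym_diff_def)
  qed
  finally show ?thesis .
qed

subsection \<open>The polynomial \<open>p\<^sub>n\<close>\<close>

definition pn_exp :: "nat \<Rightarrow> (nat \<times> nat) set \<Rightarrow> (nat \<times> nat) \<Rightarrow>\<^sub>0 nat" where
  "pn_exp n \<sigma> = (\<Sum>p\<in>\<sigma>. single p 1 + single (n,n) 1)
     + (\<Sum>p\<in>offdiag (n-1) - \<sigma>. single (fst p, n) 1 + single (snd p, n) 1)"

lemma prod_monomial: "finite A \<Longrightarrow> (\<Prod>x\<in>A. monomial (g x) :: 'k::field spoly) = monomial (\<Sum>x\<in>A. g x)"
  by (induction A rule: finite_induct) (auto simp: mult_single)

lemma pn_eq_sum: "pn n = (\<Sum>\<sigma>\<in>Pow (offdiag (n-1)). monomial (pn_exp n \<sigma>) :: 'k::field spoly)"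
proof -
  have "pn n = (\<Prod>p\<in>offdiag (n-1). monomial (single p 1 + single (n,n) 1)
      + monomial (single (fst p, n) 1 + single (snd p, n) 1) :: 'k spoly)"
    unfolding pn_def offdiag_def[symmetric]
  proof (rule prod.cong[OF refl])
    fix p assume "p \<in> offdiag (n-1)"
    then have "fst p < snd p" "snd p < n" by (auto simp: offdiag_iff)
    then show "X (fst p) (snd p) * X n n + X (fst p) n * X (snd p) n
        = monomial (single p 1 + single (n,n) 1) + (monomial (single (fst p, n) 1 + single (snd p, n) 1) :: 'k spoly)"
      by (simp add: X_def mult_single)
  qed
  also have "\<dots> = (\<Sum>\<sigma>\<in>Pow (offdiag (n-1)). (\<Prod>p\<in>\<sigma>. monomial (single p 1 + single (n,n) 1))
      * (\<Prod>p\<in>offdiag (n-1) - \<sigma>. monomial (single (fst p, n) 1 + single (snd p, n) 1)))"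
    by (rule prod_add) simp
  also have "\<dots> = (\<Sum>\<sigma>\<in>Pow (offdiag (n-1)). monomial (pn_exp n \<sigma>))"
  proof (rule sum.cong[OF refl])
    fix \<sigma> assume "\<sigma> \<in> Pow (offdiag (n-1))"
    then have "finite \<sigma>" by (blast intro: finite_subset[OF _ finite_offdiag])
    then show "(\<Prod>p\<in>\<sigma>. monomial (single p 1 + single (n,n) 1))
        * (\<Prod>p\<in>offdiag (n-1) - \<sigma>. monomial (single (fst p, n) 1 + single (snd p, n) 1))
        = (monomial (pn_exp n \<sigma>) :: 'k spoly)"
      by (simp add: prod_monomial mult_single pn_exp_def)
  qed
  finally show ?thesis .
qed

lemma offdiag_mono: "m \<le> n \<Longrightarrow> offdiag m \<subseteq> offdiag n"
  by (auto simp: offdiag_def)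

lemma offdiag_cases:
  obtains "p \<in> offdiag (n-1)" | i where "p = (i,n)" "1 \<le> i" "i < n" | "p \<notin> offdiag n"
proof (cases "p \<in> offdiag n"; cases "snd p < n")
qed (auto simp: offdiag_iff prod_eq_iff)

lemma pn_exp_Mons: "\<sigma> \<subseteq> offdiag (n-1) \<Longrightarrow> pn_exp n \<sigma> \<in> Mons n"
  unfolding pn_exp_def
  by (intro Mons_add Mons_sum Mons_single) (force simp: valid_idx_def offdiag_iff)+

lemma Vdeg_pn_exp:
  assumes "\<sigma> \<subseteq> offdiag (n-1)"
  shows "Vdeg (pn_exp n \<sigma>) = (\<lambda>k. \<Sum>p\<in>offdiag (n-1). Vcol p k + Vcol (n,n) k)"
proof
  fix k
  have "Vdeg (pn_exp n \<sigma>) k = (\<Sum>p\<in>\<sigma>. Vcol p k + Vcol (n,n) k) + (\<Sum>p\<in>offdiag (n-1) - \<sigma>. Vcol p k + Vcol (n,n) k)"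
    by (simp add: pn_exp_def Vdeg_add Vdeg_sum Vdeg_single Vcol_def)
  also have "\<dots> = (\<Sum>p\<in>offdiag (n-1). Vcol p k + Vcol (n,n) k)"
    using sum.subset_diff[OF assms finite_offdiag, of "\<lambda>p. Vcol p k + Vcol (n,n) k"] by simp
  finally show "Vdeg (pn_exp n \<sigma>) k = (\<Sum>p\<in>offdiag (n-1). Vcol p k + Vcol (n,n) k)" .
qed

lemma lookup_pn_exp_offdiag:
  assumes "\<sigma> \<subseteq> offdiag (n-1)" "q \<in> offdiag (n-1)"
  shows "lookup (pn_exp n \<sigma>) q = of_bool (q \<in> \<sigma>)"
proof -
  have "snd q < n" using assms(2) by (auto simp: offdiag_iff)
  then have "lookup (pn_exp n \<sigma>) q = (\<Sum>p\<in>\<sigma>. of_bool (p = q)) + (\<Sum>p\<in>offdiag (n-1) - \<sigma>. 0)"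
    unfolding pn_exp_def lookup_add lookup_sum
    by (intro arg_cong2[where f="(+)"] sum.cong refl) (auto simp: lookup_add lookup_single when_def)
  then show ?thesis
    using finite_subset[OF assms(1)] by simp
qed

lemma lookup_pn_exp_last_column:
  assumes "\<sigma> \<subseteq> offdiag (n-1)" "1 \<le> i" "i < n"
  shows "lookup (pn_exp n \<sigma>) (i,n) = graph_deg (offdiag (n-1) - \<sigma>) i"
proof -
  have "lookup (pn_exp n \<sigma>) (i,n) = (\<Sum>p\<in>\<sigma>. 0) + (\<Sum>p\<in>offdiag (n-1) - \<sigma>. Vcol p i)"
    unfolding pn_exp_def lookup_add lookup_sum
    by (intro arg_cong2[where f="(+)"] sum.cong refl)
      (use assms in \<open>auto simp: lookup_add lookup_single when_def Vcol_def offdiag_iff\<close>)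
  then show ?thesis by (simp add: graph_deg_def)
qed

lemma odd_offdiag_pn_exp:
  assumes "\<sigma> \<subseteq> offdiag (n-1)"
  shows "odd_offdiag n (pn_exp n \<sigma>)
    = \<sigma> \<union> {(i,n) | i. 1 \<le> i \<and> i < n \<and> odd (graph_deg (offdiag (n-1) - \<sigma>) i)}"
proof (rule set_eqI)
  fix p :: "nat \<times> nat"
  show "p \<in> odd_offdiag n (pn_exp n \<sigma>)
    \<longleftrightarrow> p \<in> \<sigma> \<union> {(i,n) | i. 1 \<le> i \<and> i < n \<and> odd (graph_deg (offdiag (n-1) - \<sigma>) i)}"
  proof (cases rule: offdiag_cases[of p n])
    case 1
    then show ?thesis
      using lookup_pn_exp_offdiag[OF assms 1] assms by (auto simp: odd_offdiag_def offdiag_iff)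
  next
    case 2
    then show ?thesis
      using lookup_pn_exp_last_column[OF assms 2(2,3)] assms by (auto simp: odd_offdiag_def offdiag_iff)
  qed (use assms offdiag_mono[of "n-1" n] in \<open>auto simp: odd_offdiag_def offdiag_iff\<close>)
qed

text \<open>An even subgraph of the complete graph on \<open>[n]\<close> is determined by its restriction to
  \<open>[n-1]\<close>: the edges at \<open>n\<close> are forced by the parities of the degrees.\<close>
lemma odd_graph_deg_restrict_iff:
  assumes "\<delta> \<subseteq> offdiag n" "even (graph_deg \<delta> i)" "1 \<le> i" "i < n"
  shows "odd (graph_deg (\<delta> \<inter> offdiag (n-1)) i) \<longleftrightarrow> (i,n) \<in> \<delta>"
proof -
  have fin: "finite \<delta>" using assms(1) by (rule finite_subset) simp
  have last_column: "snd p = n" "fst p < n" if "p \<in> \<delta> - offdiag (n-1)" for p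
  proof -
    have "p \<in> offdiag n" "p \<notin> offdiag (n-1)" using that assms(1) by auto
    then show "snd p = n" "fst p < n" by (auto simp: offdiag_iff)
  qed
  have "graph_deg (\<delta> - offdiag (n-1)) i = (\<Sum>p\<in>\<delta> - offdiag (n-1). if p = (i,n) then 1 else 0)"
    unfolding graph_deg_def
    by (rule sum.cong) (use last_column assms(4) in \<open>auto simp: Vcol_def prod_eq_iff\<close>)
  also have "\<dots> = of_bool ((i,n) \<in> \<delta>)"
    using fin assms(4) by (auto simp: offdiag_iff)
  finally have "graph_deg \<delta> i = graph_deg (\<delta> \<inter> offdiag (n-1)) i + of_bool ((i,n) \<in> \<delta>)"
    unfolding graph_deg_def using sum.Int_Diff[OF fin] by metis
  then show ?thesis
    using assms(2) by auto
qed

lemma odd_offdiag_pn_exp_sym_diff: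
  assumes \<sigma>: "\<sigma> \<subseteq> offdiag (n-1)" and \<delta>: "\<delta> \<subseteq> offdiag n" "\<And>k. even (graph_deg \<delta> k)"
  shows "odd_offdiag n (pn_exp n (sym_diff \<sigma> (\<delta> \<inter> offdiag (n-1)))) = sym_diff (odd_offdiag n (pn_exp n \<sigma>)) \<delta>"
proof -
  let ?O = "offdiag (n-1)" and ?D = "\<delta> \<inter> offdiag (n-1)"
  have \<sigma>': "sym_diff \<sigma> ?D \<subseteq> ?O"
    using \<sigma> by (auto simp: sym_diff_def)
  have "?O - sym_diff \<sigma> ?D = sym_diff (?O - \<sigma>) ?D"
    using \<sigma> by (auto simp: sym_diff_def)
  then have last_column: "odd (graph_deg (?O - sym_diff \<sigma> ?D) i) \<longleftrightarrow> odd (graph_deg (?O - \<sigma>) i) \<noteq> ((i,n) \<in> \<delta>)"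
    if "1 \<le> i" "i < n" for i
    using even_graph_deg_sym_diff[of "?O - \<sigma>" ?D i] odd_graph_deg_restrict_iff[OF \<delta> that]
    by (simp add: finite_subset[OF _ finite_offdiag])
  show ?thesis
  proof (rule set_eqI)
    fix p :: "nat \<times> nat"
    show "p \<in> odd_offdiag n (pn_exp n (sym_diff \<sigma> ?D)) \<longleftrightarrow> p \<in> sym_diff (odd_offdiag n (pn_exp n \<sigma>)) \<delta>"
    proof (cases rule: offdiag_cases[of p n])
      case 1
      then show ?thesis
        unfolding odd_offdiag_pn_exp[OF \<sigma>'] odd_offdiag_pn_exp[OF \<sigma>] by (auto simp: sym_diff_def offdiag_iff)
    next
      case (2 i)
      then show ?thesis
        unfolding odd_offdiag_pn_exp[OF \<sigma>'] odd_offdiag_pn_exp[OF \<sigma>] using last_column[OF 2(2,3)] \<sigma>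
        by (auto simp: sym_diff_def offdiag_iff)
    next
      case 3
      then show ?thesis
        using \<delta>(1) odd_offdiag_subset by (auto simp: sym_diff_def)
    qed
  qed
qed

lemma pn_mult_diff_in_Jn:
  assumes "u \<in> Mons n" "u' \<in> Mons n" "Vdeg u = Vdeg u'"
  shows "monomial u * pn n - monomial u' * pn n \<in> (Jn n :: 'k::field spoly set)"
proof -
  define \<delta> where "\<delta> = sym_diff (odd_offdiag n u) (odd_offdiag n u')"
  have \<delta>: "\<delta> \<subseteq> offdiag n" "\<And>k. even (graph_deg \<delta> k)"
    using odd_offdiag_subset even_graph_deg_odd_offdiag_diff[OF assms]
    by (auto simp: \<delta>_def sym_diff_def)
  define \<pi> where "\<pi> \<sigma> = sym_diff \<sigma> (\<delta> \<inter> offdiag (n-1))" for \<sigma>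
  have bij: "bij_betw \<pi> (Pow (offdiag (n-1))) (Pow (offdiag (n-1)))"
    by (rule bij_betw_byWitness[where f' = \<pi>]) (auto simp: \<pi>_def sym_diff_def)
  show ?thesis
    unfolding pn_eq_sum
    by (rule monomial_mult_sum_diff_in_Jn[OF _ assms bij])
      (use pn_exp_Mons Vdeg_pn_exp odd_offdiag_pn_exp_sym_diff[OF _ \<delta>] in \<open>auto simp: \<pi>_def \<delta>_def\<close>)
qed

lemma homogeneous_sum_monomial:
  "(\<And>s. s \<in> S \<Longrightarrow> Vdeg (m s) = D) \<Longrightarrow> homogeneous (\<Sum>s\<in>S. monomial (m s) :: 'k::field spoly) D"
  using keys_sum[of "\<lambda>s. monomial (m s) :: 'k spoly" S] by (auto simp: homogeneous_def)

lemma hilb_pn_le_1: "hilb n (pn n :: 'k::field spoly) b \<le> 1"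
proof (rule hilb_le_1)
  show "pn n \<in> (Rn n :: 'k spoly set)"
    unfolding pn_eq_sum by (intro Rn_sum Rn_monomial pn_exp_Mons) simp
  show "homogeneous (pn n :: 'k spoly) (\<lambda>k. \<Sum>p\<in>offdiag (n-1). Vcol p k + Vcol (n,n) k)"
    unfolding pn_eq_sum by (intro homogeneous_sum_monomial Vdeg_pn_exp) simp
qed (rule pn_mult_diff_in_Jn)

subsection \<open>The lattice \<open>L'\<^sub>n\<close>\<close>

definition lattice_comb :: "nat \<Rightarrow> (nat \<times> nat \<Rightarrow> int) \<Rightarrow> nat \<times> nat \<Rightarrow> int" where
  "lattice_comb n c ab = (\<Sum>ij\<in>offdiag n. c ij * brk (fst ij) (snd ij) ab)"

lemma Lprime_eq: "Lprime n = range (lattice_comb n)"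
  unfolding Lprime_def lattice_comb_def offdiag_def by auto

lemma lattice_comb_offdiag:
  assumes "a < b"
  shows "lattice_comb n c (a,b) = (if (a,b) \<in> offdiag n then -2 * c (a,b) else 0)"
proof -
  have "lattice_comb n c (a,b) = (\<Sum>ij\<in>offdiag n. if ij = (a,b) then -2 * c (a,b) else 0)"
    unfolding lattice_comb_def by (rule sum.cong) (use assms in \<open>auto simp: brk_def offdiag_iff\<close>)
  then show ?thesis by simp
qed

lemma lattice_comb_below: "b < a \<Longrightarrow> lattice_comb n c (a,b) = 0"
  unfolding lattice_comb_def by (rule sum.neutral) (auto simp: brk_def offdiag_iff)

lemma lattice_comb_diag: "lattice_comb n c (k,k) = (\<Sum>p\<in>offdiag n. c p * int (Vcol p k))"
  unfolding lattice_comb_def by (rule sum.cong) (auto simp: brk_def Vcol_def offdiag_iff)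

lemma Vcol_outside: "p \<in> offdiag n \<Longrightarrow> \<not> (1 \<le> k \<and> k \<le> n) \<Longrightarrow> Vcol p k = 0"
  by (auto simp: Vcol_def offdiag_iff)

text \<open>\<open>L'\<^sub>n\<close> consists of the kernel vectors of \<open>V\<^sub>n\<close> with even off-diagonal entries.\<close>
lemma Lprime_iff:
  "x \<in> Lprime n \<longleftrightarrow> (\<forall>ab. \<not> valid_idx n ab \<longrightarrow> x ab = 0) \<and> (\<forall>p\<in>offdiag n. even (x p))
     \<and> (\<forall>k. 2 * x (k,k) + (\<Sum>p\<in>offdiag n. x p * int (Vcol p k)) = 0)"
  (is "_ \<longleftrightarrow> ?outside \<and> ?even \<and> ?kernel")
proof
  assume "x \<in> Lprime n"
  then obtain c where x: "x = lattice_comb n c"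
    by (auto simp: Lprime_eq)
  have outside: ?outside
  proof (intro allI impI)
    fix ab assume invalid: "\<not> valid_idx n ab"
    obtain a b where ab: "ab = (a,b)" by (cases ab)
    consider "a < b" | "b < a" | "a = b" by linarith
    then show "x ab = 0"
    proof cases
      case 3
      then have "\<not> (1 \<le> a \<and> a \<le> n)" using invalid by (auto simp: ab valid_idx_def)
      then show ?thesis by (simp add: ab 3 x lattice_comb_diag Vcol_outside)
    qed (use invalid in \<open>auto simp: ab x lattice_comb_offdiag lattice_comb_below valid_idx_def offdiag_iff\<close>)
  qed
  have off: "x p = -2 * c p" if "p \<in> offdiag n" for p
    using that by (cases p) (simp add: x lattice_comb_offdiag offdiag_iff)
  have ?kernel
  proof
    fix k
    have "(\<Sum>p\<in>offdiag n. x p * int (Vcol p k)) = (\<Sum>p\<in>offdiag n. -2 * (c p * int (Vcol p k)))"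
      by (rule sum.cong) (simp_all add: off)
    moreover have "x (k,k) = (\<Sum>p\<in>offdiag n. c p * int (Vcol p k))"
      by (simp add: x lattice_comb_diag)
    ultimately show "2 * x (k,k) + (\<Sum>p\<in>offdiag n. x p * int (Vcol p k)) = 0"
      by (simp add: sum_negf sum_distrib_left)
  qed
  with outside off show "?outside \<and> ?even \<and> ?kernel" by simp
next
  assume "?outside \<and> ?even \<and> ?kernel"
  then have outside: ?outside and even: ?even and kernel: ?kernel by blast+
  define c where "c p = - (x p div 2)" for p
  have off: "x p = -2 * c p" if "p \<in> offdiag n" for p
    using even that by (simp add: c_def)
  have "x ab = lattice_comb n c ab" for ab
  proof -
    obtain a b where ab: "ab = (a,b)" by (cases ab)
    consider "a < b" | "b < a" | "a = b" by linarith
    then show ?thesis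
    proof cases
      case 1
      then show ?thesis
        using outside off by (auto simp: ab lattice_comb_offdiag valid_idx_def offdiag_iff)
    next
      case 2
      then show ?thesis
        using outside by (auto simp: ab lattice_comb_below valid_idx_def)
    next
      case 3
      have "2 * x (a,a) = - (\<Sum>p\<in>offdiag n. x p * int (Vcol p a))"
        using kernel by (simp add: eq_neg_iff_add_eq_0)
      also have "\<dots> = 2 * (\<Sum>p\<in>offdiag n. c p * int (Vcol p a))"
        by (simp add: off sum_distrib_left sum_negf[symmetric] algebra_simps cong: sum.cong)
      finally show ?thesis
        by (simp add: ab 3 lattice_comb_diag)
    qed
  qed
  then have "x = lattice_comb n c" ..
  then show "x \<in> Lprime n"
    by (simp add: Lprime_eq)
qed

lemma Mons_iff_lookup: "v \<in> Mons n \<longleftrightarrow> (\<forall>ab. \<not> valid_idx n ab \<longrightarrow> lookup v ab = 0)"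
  by (auto simp: Mons_def in_keys_iff)

lemma Lequiv_iff:
  assumes u: "u \<in> Mons n"
  shows "(u,v) \<in> Lequiv n \<longleftrightarrow> v \<in> Mons n \<and> Vdeg v = Vdeg u \<and> odd_offdiag n v = odd_offdiag n u"
proof -
  let ?x = "\<lambda>ab. int (lookup u ab) - int (lookup v ab)"
  have outside: "(\<forall>ab. \<not> valid_idx n ab \<longrightarrow> ?x ab = 0) \<longleftrightarrow> v \<in> Mons n"
    using lookup_Mons_invalid[OF u] by (auto simp: Mons_iff_lookup)
  have even: "(\<forall>p\<in>offdiag n. even (?x p)) \<longleftrightarrow> odd_offdiag n v = odd_offdiag n u"
    by (auto simp: odd_offdiag_def set_eq_iff)
  have kernel: "(\<forall>k. 2 * ?x (k,k) + (\<Sum>p\<in>offdiag n. ?x p * int (Vcol p k)) = 0) \<longleftrightarrow> Vdeg v = Vdeg u"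
    if v: "v \<in> Mons n"
  proof -
    have "2 * ?x (k,k) + (\<Sum>p\<in>offdiag n. ?x p * int (Vcol p k)) = int (Vdeg u k) - int (Vdeg v k)" for k
      unfolding Vdeg_diag_offdiag[OF u] Vdeg_diag_offdiag[OF v]
      by (simp add: sum_subtractf left_diff_distrib)
    then have "(\<forall>k. 2 * ?x (k,k) + (\<Sum>p\<in>offdiag n. ?x p * int (Vcol p k)) = 0) \<longleftrightarrow> (\<forall>k. Vdeg u k = Vdeg v k)"
      by simp
    then show ?thesis
      by (auto simp: fun_eq_iff)
  qed
  show ?thesis
    unfolding Lequiv_def Lprime_iff using outside even kernel by auto
qed

subsection \<open>Sums over equivalence classes\<close>

definition class_rep :: "((nat \<times> nat) \<Rightarrow>\<^sub>0 nat) set \<Rightarrow> (nat \<times> nat) \<Rightarrow>\<^sub>0 nat" where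
  "class_rep C = (SOME u. u \<in> C)"

lemma class_sum_eq: "class_sum n c = (\<Sum>C\<in>fiber n c // Lequiv n. monomial (class_rep C))"
  unfolding class_sum_def class_rep_def ..

lemma Lequiv_class_eq:
  "u \<in> Mons n \<Longrightarrow> Lequiv n `` {u} = {v \<in> Mons n. Vdeg v = Vdeg u \<and> odd_offdiag n v = odd_offdiag n u}"
  using Lequiv_iff[of u n] by auto

lemma class_rep_Lequiv:
  assumes "u \<in> Mons n"
  shows "class_rep (Lequiv n `` {u}) \<in> Mons n"
    and "Vdeg (class_rep (Lequiv n `` {u})) = Vdeg u"
    and "odd_offdiag n (class_rep (Lequiv n `` {u})) = odd_offdiag n u"
proof -
  have "class_rep (Lequiv n `` {u}) \<in> Lequiv n `` {u}"
    unfolding class_rep_def by (rule someI[of _ u]) (simp add: Lequiv_class_eq assms)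
  then show "class_rep (Lequiv n `` {u}) \<in> Mons n"
    and "Vdeg (class_rep (Lequiv n `` {u})) = Vdeg u"
    and "odd_offdiag n (class_rep (Lequiv n `` {u})) = odd_offdiag n u"
    by (simp_all add: Lequiv_class_eq assms)
qed

lemma fiber_quotient_rep:
  assumes "C \<in> fiber n c // Lequiv n"
  shows "class_rep C \<in> Mons n" and "Vdeg (class_rep C) = c" and "C = Lequiv n `` {class_rep C}"
proof -
  obtain u where u: "u \<in> Mons n" "Vdeg u = c" and C: "C = Lequiv n `` {u}"
    using assms by (auto simp: quotient_def fiber_def)
  note rep = class_rep_Lequiv[OF u(1), folded C]
  show "class_rep C \<in> Mons n" "Vdeg (class_rep C) = c"
    using rep u by simp_all
  have "Lequiv n `` {class_rep C} = Lequiv n `` {u}"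
    unfolding Lequiv_class_eq[OF rep(1)] Lequiv_class_eq[OF u(1)] rep(2,3) ..
  with C show "C = Lequiv n `` {class_rep C}"
    by (rule trans[OF _ sym])
qed

lemma fiber_quotient_eqI:
  assumes "C \<in> fiber n c // Lequiv n" "C' \<in> fiber n c // Lequiv n"
    and "odd_offdiag n (class_rep C) = odd_offdiag n (class_rep C')"
  shows "C = C'"
proof -
  note rep = fiber_quotient_rep[OF assms(1)] and rep' = fiber_quotient_rep[OF assms(2)]
  have "Lequiv n `` {class_rep C} = Lequiv n `` {class_rep C'}"
    using rep(1,2) rep'(1,2) assms(3) by (simp add: Lequiv_class_eq)
  then show ?thesis
    using rep(3) rep'(3) by simp
qed

lemma graph_deg_offdiag:
  assumes k: "k \<in> {1..n}"
  shows "graph_deg (offdiag n) k = n - 1"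
proof -
  have "graph_deg (offdiag n) k
      = (\<Sum>p\<in>offdiag n. if fst p = k then 1 else 0) + (\<Sum>p\<in>offdiag n. if snd p = k then 1 else 0)"
    by (simp add: graph_deg_def Vcol_def sum.distrib)
  also have "(\<Sum>p\<in>offdiag n. if fst p = k then 1 else 0) = card ((\<lambda>j. (k,j)) ` {k<..n})"
    using k by (simp add: sum.If_cases Int_def) (rule arg_cong[where f = card], auto simp: offdiag_def)
  also have "(\<Sum>p\<in>offdiag n. if snd p = k then 1 else 0) = card ((\<lambda>i. (i,k)) ` {1..<k})"
    using k by (simp add: sum.If_cases Int_def) (rule arg_cong[where f = card], auto simp: offdiag_def)
  finally show ?thesis
    using k by (simp add: card_image inj_on_def)
qed

lemma graph_deg_le:
  assumes "\<sigma> \<subseteq> offdiag n" "k \<in> {1..n}"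
  shows "graph_deg \<sigma> k \<le> n - 1"
  unfolding graph_deg_offdiag[OF assms(2), symmetric] graph_deg_def
  using assms(1) by (intro sum_mono2) auto

definition parity_witness :: "nat \<Rightarrow> (nat \<Rightarrow> nat) \<Rightarrow> (nat \<times> nat) set \<Rightarrow> (nat \<times> nat) \<Rightarrow>\<^sub>0 nat" where
  "parity_witness n c \<sigma> = (\<Sum>p\<in>\<sigma>. single p 1) + (\<Sum>k\<in>{1..n}. single (k,k) ((c k - graph_deg \<sigma> k) div 2))"

lemma parity_witness_Mons: "\<sigma> \<subseteq> offdiag n \<Longrightarrow> parity_witness n c \<sigma> \<in> Mons n"
  unfolding parity_witness_def
  by (intro Mons_add Mons_sum Mons_single) (auto simp: valid_idx_def offdiag_iff)

lemma lookup_parity_witness_offdiag: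
  assumes "\<sigma> \<subseteq> offdiag n" "p \<in> offdiag n"
  shows "lookup (parity_witness n c \<sigma>) p = of_bool (p \<in> \<sigma>)"
proof -
  have "lookup (parity_witness n c \<sigma>) p = (\<Sum>q\<in>\<sigma>. of_bool (q = p)) + (\<Sum>k\<in>{1..n}. 0)"
    unfolding parity_witness_def lookup_add lookup_sum
    by (intro arg_cong2[where f = "(+)"] sum.cong refl) (use assms(2) in \<open>auto simp: lookup_single when_def offdiag_iff\<close>)
  then show ?thesis
    using finite_subset[OF assms(1)] by simp
qed

lemma lookup_parity_witness_diag:
  "lookup (parity_witness n c \<sigma>) (k,k) = (if k \<in> {1..n} then (c k - graph_deg \<sigma> k) div 2 else 0)"
    if "\<sigma> \<subseteq> offdiag n"
proof -
  have "lookup (parity_witness n c \<sigma>) (k,k) = (\<Sum>q\<in>\<sigma>. 0) + (\<Sum>l\<in>{1..n}. if l = k then (c k - graph_deg \<sigma> k) div 2 else 0)"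
    unfolding parity_witness_def lookup_add lookup_sum
    by (intro arg_cong2[where f = "(+)"] sum.cong refl) (use that in \<open>auto simp: lookup_single when_def offdiag_iff\<close>)
  then show ?thesis by simp
qed

lemma odd_offdiag_parity_witness:
  assumes "\<sigma> \<subseteq> offdiag n"
  shows "odd_offdiag n (parity_witness n c \<sigma>) = \<sigma>"
proof (rule set_eqI)
  fix p
  show "p \<in> odd_offdiag n (parity_witness n c \<sigma>) \<longleftrightarrow> p \<in> \<sigma>"
    using assms lookup_parity_witness_offdiag[OF assms, of p] by (auto simp: odd_offdiag_def)
qed

lemma Vdeg_parity_witness:
  assumes \<sigma>: "\<sigma> \<subseteq> offdiag n" and c0: "\<And>k. k \<notin> {1..n} \<Longrightarrow> c k = 0"
    and c: "\<And>k. k \<in> {1..n} \<Longrightarrow> graph_deg \<sigma> k \<le> c k \<and> even (c k + graph_deg \<sigma> k)"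
  shows "Vdeg (parity_witness n c \<sigma>) = c"
proof
  fix k
  have "(\<Sum>p\<in>offdiag n. lookup (parity_witness n c \<sigma>) p * Vcol p k) = graph_deg \<sigma> k"
  proof -
    have "(\<Sum>p\<in>offdiag n. lookup (parity_witness n c \<sigma>) p * Vcol p k)
        = (\<Sum>p\<in>offdiag n. if p \<in> \<sigma> then Vcol p k else 0)"
      by (rule sum.cong) (simp_all add: lookup_parity_witness_offdiag[OF \<sigma>])
    also have "\<dots> = graph_deg \<sigma> k"
      using \<sigma> by (simp add: graph_deg_def sum.If_cases Int_absorb1)
    finally show ?thesis .
  qed
  then have "Vdeg (parity_witness n c \<sigma>) k = 2 * lookup (parity_witness n c \<sigma>) (k,k) + graph_deg \<sigma> k"
    by (simp add: Vdeg_diag_offdiag[OF parity_witness_Mons[OF \<sigma>]])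
  moreover have "graph_deg \<sigma> k = 0" if "k \<notin> {1..n}"
    unfolding graph_deg_def using \<sigma> that by (intro sum.neutral) (auto simp: Vcol_outside)
  ultimately show "Vdeg (parity_witness n c \<sigma>) k = c k"
    using c[of k] c0[of k] by (auto simp: lookup_parity_witness_diag[OF \<sigma>] elim!: evenE)
qed

text \<open>Here the bound \<open>c k \<ge> n - 2\<close> is used: a vertex degree of a graph on \<open>[n]\<close> is at most
  \<open>n - 1\<close>, so a degree of the right parity never exceeds \<open>c k\<close>.\<close>
lemma parity_witness_in_fiber:
  assumes "2 \<le> n" "\<And>k. k \<notin> {1..n} \<Longrightarrow> c k = 0" "\<And>k. k \<in> {1..n} \<Longrightarrow> n - 2 \<le> c k"
    and "\<sigma> \<subseteq> offdiag n" "\<And>k. even (c k + graph_deg \<sigma> k)"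
  shows "parity_witness n c \<sigma> \<in> fiber n c"
proof -
  have "graph_deg \<sigma> k \<le> c k" if k: "k \<in> {1..n}" for k
    using graph_deg_le[OF assms(4) k] assms(3)[OF k] assms(1) assms(5)[of k] by presburger
  then show ?thesis
    unfolding fiber_def using assms by (auto intro!: parity_witness_Mons Vdeg_parity_witness)
qed

lemma class_sum_mult_diff_in_Jn:
  assumes n: "2 \<le> n" and c0: "\<And>k. k \<notin> {1..n} \<Longrightarrow> c k = 0" and c: "\<And>k. k \<in> {1..n} \<Longrightarrow> n - 2 \<le> c k"
    and u: "u \<in> Mons n" "u' \<in> Mons n" "Vdeg u = Vdeg u'"
  shows "monomial u * class_sum n c - monomial u' * class_sum n c \<in> (Jn n :: 'k::field spoly set)"
proof -
  let ?Q = "fiber n c // Lequiv n"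
  define \<delta> where "\<delta> = sym_diff (odd_offdiag n u) (odd_offdiag n u')"
  have \<delta>: "\<delta> \<subseteq> offdiag n" "\<And>k. even (graph_deg \<delta> k)"
    using odd_offdiag_subset even_graph_deg_odd_offdiag_diff[OF u]
    by (auto simp: \<delta>_def sym_diff_def)
  define \<sigma> where "\<sigma> C = sym_diff (odd_offdiag n (class_rep C)) \<delta>" for C
  define \<pi> where "\<pi> C = Lequiv n `` {parity_witness n c (\<sigma> C)}" for C
  have \<sigma>: "\<sigma> C \<subseteq> offdiag n" for C
    using \<delta>(1) odd_offdiag_subset by (auto simp: \<sigma>_def sym_diff_def)
  have witness: "parity_witness n c (\<sigma> C) \<in> fiber n c" if C: "C \<in> ?Q" for C
  proof (rule parity_witness_in_fiber[OF n c0 c \<sigma>])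
    fix k
    note rep = fiber_quotient_rep[OF C]
    show "even (c k + graph_deg (\<sigma> C) k)"
      using even_Vdeg_iff[OF rep(1), of k] \<delta>(2)[of k] rep(2)
        even_graph_deg_sym_diff[of "odd_offdiag n (class_rep C)" \<delta> k]
        finite_subset[OF odd_offdiag_subset finite_offdiag] finite_subset[OF \<delta>(1) finite_offdiag]
      by (auto simp: \<sigma>_def)
  qed
  have \<pi>_Q: "\<pi> C \<in> ?Q" if "C \<in> ?Q" for C
    unfolding \<pi>_def using witness[OF that] by (rule quotientI)
  have odd_\<pi>: "odd_offdiag n (class_rep (\<pi> C)) = sym_diff (odd_offdiag n (class_rep C)) \<delta>"
    if "C \<in> ?Q" for C
    using class_rep_Lequiv(3)[of "parity_witness n c (\<sigma> C)"] witness[OF that]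
      odd_offdiag_parity_witness[OF \<sigma>]
    by (simp add: \<pi>_def \<sigma>_def fiber_def)
  have "\<pi> (\<pi> C) = C" if "C \<in> ?Q" for C
    using that \<pi>_Q[OF that] by (intro fiber_quotient_eqI[OF \<pi>_Q]) (auto simp: odd_\<pi> sym_diff_def)
  then have bij: "bij_betw \<pi> ?Q ?Q"
    using \<pi>_Q by (intro bij_betw_byWitness[where f' = \<pi>]) auto
  show ?thesis
    unfolding class_sum_eq
    by (rule monomial_mult_sum_diff_in_Jn[where D = c, OF _ u bij])
      (auto simp: odd_\<pi> \<delta>_def fiber_quotient_rep)
qed

lemma hilb_class_sum_le_1:
  assumes "2 \<le> n" "\<And>k. k \<notin> {1..n} \<Longrightarrow> c k = 0" "\<And>k. k \<in> {1..n} \<Longrightarrow> n - 2 \<le> c k"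
  shows "hilb n (class_sum n c :: 'k::field spoly) b \<le> 1"
proof (rule hilb_le_1)
  note rep = fiber_quotient_rep(1,2)
  show "class_sum n c \<in> (Rn n :: 'k spoly set)"
    unfolding class_sum_eq by (intro Rn_sum Rn_monomial rep)
  show "homogeneous (class_sum n c :: 'k spoly) c"
    unfolding class_sum_eq by (intro homogeneous_sum_monomial rep)
qed (rule class_sum_mult_diff_in_Jn[OF assms])

theorem lemma2p19:
  fixes n :: nat
  assumes "n \<ge> 2"
  shows "(\<forall>b. hilb n (pn n :: 'k::field spoly) b \<in> {0, 1}) \<and>
         (\<forall>i \<in> {1..n}. \<forall>b. hilb n (pplus n i :: 'k::field spoly) b \<in> {0, 1})"
proof (intro conjI ballI allI)
  fix b
  show "hilb n (pn n :: 'k spoly) b \<in> {0, 1}"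
    using hilb_pn_le_1[of n b] by (auto simp: le_Suc_eq)
next
  fix i b assume "i \<in> {1..n}"
  have "hilb n (pplus n i :: 'k spoly) b \<le> 1"
    unfolding pplus_def by (split if_split, intro conjI impI; rule hilb_class_sum_le_1[OF assms]) auto
  then show "hilb n (pplus n i :: 'k spoly) b \<in> {0, 1}" by (auto simp: le_Suc_eq)
qed

end
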